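(* Let $H$ be a separable complex Hilbert space, let $\mathcal{U}$ be a unitary system on $H$, let $\psi,\eta\in\mathcal{W}(\mathcal{U})$, and let $V$ be the unique unitary operator in the local commutant $\mathcal{C}_\psi(\mathcal{U})$ with $V\psi=\eta$. Suppose that for some $0<\alpha<\frac{\pi}{2}$ the vector $\rho:=\cos\alpha\cdot\psi+i\sin\alpha\cdot\eta$ belongs to $\mathcal{W}(\mathcal{U})$. Then $V^2=I$.
   Context: A unitary system on $H$ is a collection $\mathcal{U}$ of unitary operators on $H$ containing the identity operator. A vector $\psi\in H$ is a complete wandering vector for $\mathcal{U}$ if $\{U\psi:U\in\mathcal{U}\}$ is an orthonormal set (distinct elements of $\mathcal{U}$ giving orthogonal vectors) whose closed linear span is $H$; $\mathcal{W}(\mathcal{U})$ denotes the set of such vectors. The local commutant of $\mathcal{U}$ at $\psi$ is $\mathcal{C}_\psi(\mathcal{U}):=\{A\in B(H): (AU-UA)\psi=0 \text{ for all } U\in\mathcal{U}\}$. For $\psi,\eta\in\mathcal{W}(\mathcal{U})$ there is exactly one unitary $V\in\mathcal{C}_\psi(\mathcal{U})$ with $V\psi=\eta$, namely the unitary with $V(U\psi)=U\eta$ for all $U\in\mathcal{U}$. *)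

theory Defs
  imports "HOL-Analysis.Analysis"
begin

text \<open>Complex Hilbert spaces: a Banach space (over the reals, via the library class
  complete_space) carrying a complex scalar multiplication compatible with the real one,
  and a complex inner product (linear in the second, conjugate-linear in the first
  argument) inducing the norm.\<close>

class complex_hilbert = real_normed_vector + complete_space +
  fixes scaleC :: "complex \<Rightarrow> 'a \<Rightarrow> 'a" (infixr \<open>*\<^sub>C\<close> 75)
    and cinner :: "'a \<Rightarrow> 'a \<Rightarrow> complex"
  assumes scaleC_add_right: "a *\<^sub>C (x + y) = a *\<^sub>C x + a *\<^sub>C y"
    and scaleC_add_left: "(a + b) *\<^sub>C x = a *\<^sub>C x + b *\<^sub>C x"
    and scaleC_scaleC: "a *\<^sub>C (b *\<^sub>C x) = (a * b) *\<^sub>C x"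
    and scaleC_one: "1 *\<^sub>C x = x"
    and scaleR_scaleC: "scaleR r x = complex_of_real r *\<^sub>C x"
    and cinner_commute: "cinner x y = cnj (cinner y x)"
    and cinner_add_left: "cinner (x + y) z = cinner x z + cinner y z"
    and cinner_scaleC_left: "cinner (a *\<^sub>C x) y = cnj a * cinner x y"
    and cinner_nonneg: "0 \<le> Re (cinner x x)"
    and cinner_eq_zero_iff: "cinner x x = 0 \<longleftrightarrow> x = 0"
    and norm_eq_sqrt_cinner: "norm x = sqrt (Re (cinner x x))"

definition separable_space :: "'a::topological_space itself \<Rightarrow> bool" where
  "separable_space _ \<longleftrightarrow> (\<exists>D::'a set. countable D \<and> closure D = UNIV)"

definition cspan :: "'a::complex_hilbert set \<Rightarrow> 'a set" where
  "cspan S = {x. \<exists>F c. finite F \<and> F \<subseteq> S \<and> x = (\<Sum>v\<in>F. c v *\<^sub>C v)}"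

definition clinear :: "('a::complex_hilbert \<Rightarrow> 'a) \<Rightarrow> bool" where
  "clinear A \<longleftrightarrow> (\<forall>x y. A (x + y) = A x + A y) \<and> (\<forall>a x. A (a *\<^sub>C x) = a *\<^sub>C A x)"

definition bounded_op :: "('a::complex_hilbert \<Rightarrow> 'a) \<Rightarrow> bool" where
  "bounded_op A \<longleftrightarrow> clinear A \<and> (\<exists>K. \<forall>x. norm (A x) \<le> K * norm x)"

definition unitary :: "('a::complex_hilbert \<Rightarrow> 'a) \<Rightarrow> bool" where
  "unitary U \<longleftrightarrow> bounded_op U \<and> surj U \<and> (\<forall>x y. cinner (U x) (U y) = cinner x y)"

definition unitary_system :: "('a::complex_hilbert \<Rightarrow> 'a) set \<Rightarrow> bool" where
  "unitary_system \<U> \<longleftrightarrow> (\<forall>U\<in>\<U>. unitary U) \<and> id \<in> \<U>"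

definition wandering :: "('a::complex_hilbert \<Rightarrow> 'a) set \<Rightarrow> 'a set" where
  "wandering \<U> = {\<psi>. (\<forall>U\<in>\<U>. \<forall>W\<in>\<U>. cinner (U \<psi>) (W \<psi>) = (if U = W then 1 else 0))
                     \<and> closure (cspan ((\<lambda>U. U \<psi>) ` \<U>)) = UNIV}"

definition local_commutant :: "('a::complex_hilbert \<Rightarrow> 'a) set \<Rightarrow> 'a \<Rightarrow> ('a \<Rightarrow> 'a) set" where
  "local_commutant \<U> \<psi> = {A. bounded_op A \<and> (\<forall>U\<in>\<U>. A (U \<psi>) - U (A \<psi>) = 0)}"

end

theory Submission
  imports Defs
begin

text \<open>Expanding the orthonormality relations of the rotated vector
  \<open>\<rho> = cos \<alpha> \<psi> + i sin \<alpha> \<eta>\<close> leaves the cross terms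
  \<open>i cos \<alpha> sin \<alpha> (\<langle>U\<psi>, W\<eta>\<rangle> - \<langle>U\<eta>, W\<psi>\<rangle>)\<close>, so these vanish.
  Since \<open>V (U\<psi>) = U\<eta>\<close>, this says \<open>\<langle>U\<psi>, V (W\<psi>)\<rangle> = \<langle>V (U\<psi>), W\<psi>\<rangle>\<close> on the
  complete orthonormal system \<open>{U\<psi>}\<close>; by continuity \<open>V\<close> is self-adjoint, and a
  self-adjoint unitary is an involution.\<close>

lemma cinner_add_right: "cinner x (y + z) = cinner x y + cinner x z"
  by (metis cinner_commute cinner_add_left complex_cnj_add)

lemma cinner_scaleC_right: "cinner x (a *\<^sub>C y) = a * cinner x y"
  by (metis cinner_commute cinner_scaleC_left complex_cnj_mult complex_cnj_cnj)

lemma cinner_zero_left: "cinner 0 y = 0"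
  using cinner_add_left[of 0 0 y] by simp

lemma cinner_zero_right: "cinner x 0 = 0"
  by (metis cinner_commute cinner_zero_left complex_cnj_zero)

lemma cinner_diff_left: "cinner (x - y) z = cinner x z - cinner y z"
  using cinner_add_left[of "x - y" y z] by simp

lemma power2_norm_eq_cinner: "(norm x)\<^sup>2 = Re (cinner x x)"
  using norm_eq_sqrt_cinner[of x] cinner_nonneg[of x] by simp

lemma Re_cinner_polarization:
  "Re (cinner x z) = ((norm (x + z))\<^sup>2 - (norm x)\<^sup>2 - (norm z)\<^sup>2) / 2"
proof -
  have "cinner (x + z) (x + z) = cinner x x + cinner x z + cnj (cinner x z) + cinner z z"
    by (simp add: cinner_add_left cinner_add_right cinner_commute[of z x])
  then show ?thesis
    by (simp add: power2_norm_eq_cinner)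
qed

lemma Im_cinner_eq_Re: "Im (cinner x z) = - Re (cinner x (\<i> *\<^sub>C z))"
  by (simp add: cinner_scaleC_right)

lemma continuous_on_cinner_left [continuous_intros]:
  assumes "continuous_on S f"
  shows "continuous_on S (\<lambda>x. cinner (f x) z)"
proof -
  have "(\<lambda>x. cinner (f x) z) = (\<lambda>x. Complex
      (((norm (f x + z))\<^sup>2 - (norm (f x))\<^sup>2 - (norm z)\<^sup>2) / 2)
      (- (((norm (f x + \<i> *\<^sub>C z))\<^sup>2 - (norm (f x))\<^sup>2 - (norm (\<i> *\<^sub>C z))\<^sup>2) / 2)))"
    by (rule ext) (metis Re_cinner_polarization Im_cinner_eq_Re complex_surj)
  then show ?thesis
    by (simp only:) (intro continuous_intros assms, simp_all)
qed

lemma continuous_on_cinner_right [continuous_intros]: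
  assumes "continuous_on S f"
  shows "continuous_on S (\<lambda>x. cinner z (f x))"
  using continuous_on_cnj[OF continuous_on_cinner_left[OF assms, of z]]
  by (simp add: cinner_commute[of z])

lemma clinear_zero: "clinear A \<Longrightarrow> A 0 = 0"
  unfolding clinear_def by (metis add_cancel_right_right add_0)

lemma bounded_op_imp_bounded_linear: "bounded_op A \<Longrightarrow> bounded_linear A"
  unfolding bounded_op_def clinear_def
  by (metis bounded_linear_intro mult.commute scaleR_scaleC)

lemma closed_subspace_contains_dense_cspan_eq_UNIV:
  assumes "closure (cspan B) = UNIV" and "closed S" and "B \<subseteq> S" and "0 \<in> S"
    and "\<And>x y. x \<in> S \<Longrightarrow> y \<in> S \<Longrightarrow> x + y \<in> S"
    and "\<And>a x. x \<in> S \<Longrightarrow> a *\<^sub>C x \<in> S"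
  shows "S = UNIV"
proof -
  have "(\<Sum>v\<in>F. c v *\<^sub>C v) \<in> S" if "finite F" "F \<subseteq> B" for F c
    using that by (induction F rule: finite_induct) (use assms(3-6) in auto)
  then have "cspan B \<subseteq> S"
    unfolding cspan_def by blast
  then show ?thesis
    using assms(1,2) closure_minimal by blast
qed

lemma cinner_adjoint_on_dense_cspan:
  assumes span: "closure (cspan B) = UNIV" and "bounded_op A" and "bounded_op A'"
    and adj: "\<And>x y. x \<in> B \<Longrightarrow> y \<in> B \<Longrightarrow> cinner x (A y) = cinner (A' x) y"
  shows "cinner x (A y) = cinner (A' x) y"
proof -
  have contA: "continuous_on UNIV A" and contA': "continuous_on UNIV A'"
    using assms(2,3) by (auto intro: linear_continuous_on bounded_op_imp_bounded_linear)
  have linA: "clinear A" and linA': "clinear A'"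
    using assms(2,3) unfolding bounded_op_def by auto
  have adj_right: "cinner x (A y) = cinner (A' x) y" if "x \<in> B" for x y
  proof -
    have "{y. cinner x (A y) = cinner (A' x) y} = UNIV"
    proof (rule closed_subspace_contains_dense_cspan_eq_UNIV[OF span])
      show "closed {y. cinner x (A y) = cinner (A' x) y}"
        by (intro closed_Collect_eq continuous_intros contA continuous_on_id)
    qed (use that adj linA in \<open>auto simp: clinear_def clinear_zero cinner_zero_right
          cinner_add_right cinner_scaleC_right\<close>)
    then show ?thesis by blast
  qed
  have "{x. cinner x (A y) = cinner (A' x) y} = UNIV"
  proof (rule closed_subspace_contains_dense_cspan_eq_UNIV[OF span])
    show "closed {x. cinner x (A y) = cinner (A' x) y}"
      by (intro closed_Collect_eq continuous_intros contA' continuous_on_id)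
  qed (use adj_right linA' in \<open>auto simp: clinear_def clinear_zero cinner_zero_left
        cinner_add_left cinner_scaleC_left\<close>)
  then show ?thesis by blast
qed

lemma unitary_selfadjoint_involution:
  assumes "unitary V" and selfadj: "\<And>x y. cinner x (V y) = cinner (V x) y"
  shows "V \<circ> V = id"
proof
  fix x
  have "cinner (V (V x) - x) y = 0" for y
    using selfadj[of "V x" y] assms(1) by (simp add: unitary_def cinner_diff_left)
  then have "V (V x) - x = 0"
    using cinner_eq_zero_iff by blast
  then show "(V \<circ> V) x = id x" by simp
qed

lemma wandering_rotation_cross_terms_eq:
  fixes a b :: real
  assumes "unitary_system \<U>" and "\<psi> \<in> wandering \<U>" and "\<eta> \<in> wandering \<U>"
    and "complex_of_real a *\<^sub>C \<psi> + (\<i> * complex_of_real b) *\<^sub>C \<eta> \<in> wandering \<U>"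
    and "a\<^sup>2 + b\<^sup>2 = 1" and "a * b \<noteq> 0"
    and U: "U \<in> \<U>" and W: "W \<in> \<U>"
  shows "cinner (U \<psi>) (W \<eta>) = cinner (U \<eta>) (W \<psi>)"
proof -
  define \<delta> where "\<delta> = (if U = W then 1 else (0::complex))"
  define \<rho> where "\<rho> = complex_of_real a *\<^sub>C \<psi> + (\<i> * complex_of_real b) *\<^sub>C \<eta>"
  have orth: "cinner (U \<psi>) (W \<psi>) = \<delta>" "cinner (U \<eta>) (W \<eta>) = \<delta>" "cinner (U \<rho>) (W \<rho>) = \<delta>"
    using assms(2-4) U W unfolding wandering_def \<rho>_def \<delta>_def by auto
  have "U \<rho> = complex_of_real a *\<^sub>C U \<psi> + (\<i> * complex_of_real b) *\<^sub>C U \<eta>"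
    and "W \<rho> = complex_of_real a *\<^sub>C W \<psi> + (\<i> * complex_of_real b) *\<^sub>C W \<eta>"
    using assms(1) U W unfolding unitary_system_def unitary_def bounded_op_def clinear_def \<rho>_def
    by auto
  then have "cinner (U \<rho>) (W \<rho>) = complex_of_real (a\<^sup>2 + b\<^sup>2) * \<delta>
      + \<i> * complex_of_real (a * b) * (cinner (U \<psi>) (W \<eta>) - cinner (U \<eta>) (W \<psi>))"
    using orth(1,2)
    by (simp add: cinner_add_left cinner_add_right cinner_scaleC_left cinner_scaleC_right
        power2_eq_square algebra_simps)
  then have "\<i> * complex_of_real (a * b) * (cinner (U \<psi>) (W \<eta>) - cinner (U \<eta>) (W \<psi>)) = 0"
    using orth(3) assms(5) by simp
  then show ?thesis
    using assms(6) by simp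
qed

theorem proposition5:
  fixes \<U> :: "('a::complex_hilbert \<Rightarrow> 'a) set"
    and \<psi> \<eta> :: 'a and V :: "'a \<Rightarrow> 'a" and \<alpha> :: real
  assumes "separable_space TYPE('a)"
    and "unitary_system \<U>"
    and "\<psi> \<in> wandering \<U>" and "\<eta> \<in> wandering \<U>"
    and "unitary V" and "V \<in> local_commutant \<U> \<psi>" and "V \<psi> = \<eta>"
    and "0 < \<alpha>" and "\<alpha> < pi / 2"
    and "complex_of_real (cos \<alpha>) *\<^sub>C \<psi> + (\<i> * complex_of_real (sin \<alpha>)) *\<^sub>C \<eta> \<in> wandering \<U>"
  shows "V \<circ> V = id"
proof -
  have "cos \<alpha> * sin \<alpha> \<noteq> 0"
    using assms(8,9) cos_gt_zero_pi[of \<alpha>] sin_gt_zero[of \<alpha>] by auto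
  then have cross: "cinner (U \<psi>) (W \<eta>) = cinner (U \<eta>) (W \<psi>)" if "U \<in> \<U>" "W \<in> \<U>" for U W
    using wandering_rotation_cross_terms_eq[OF assms(2-4,10)] that by simp
  have V_shift: "V (U \<psi>) = U \<eta>" if "U \<in> \<U>" for U
    using assms(6,7) that unfolding local_commutant_def by auto
  have span: "closure (cspan ((\<lambda>U. U \<psi>) ` \<U>)) = UNIV"
    using assms(3) unfolding wandering_def by simp
  have bounded: "bounded_op V"
    using assms(5) unfolding unitary_def by blast
  have "cinner x (V y) = cinner (V x) y" for x y
    by (rule cinner_adjoint_on_dense_cspan[OF span bounded bounded]) (auto simp: cross V_shift)
  then show ?thesis
    by (rule unitary_selfadjoint_involution[OF assms(5)])
qed

end
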